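(* Let $\mathbf{A}$ be an $n$-dimensional cyclic Leibniz algebra over $\mathbb{C}$ with a generator $a$ satisfying $$aa^n=\alpha_k a^k+\alpha_{k+1}a^{k+1}+\cdots+\alpha_n a^n$$ for some $2\le k\le n$ and $\alpha_k,\ldots,\alpha_n\in\mathbb{C}$ with $\alpha_k\neq 0$. Then: (i) every generator $x=c_1a+c_2a^2+\cdots+c_na^n$ ($c_i\in\mathbb{C}$) of $\mathbf{A}$ satisfies $$xx^n=c_1^{\,n-k+1}\alpha_k x^k+c_1^{\,n-k}\alpha_{k+1}x^{k+1}+\cdots+c_1\alpha_n x^n,$$ i.e. the coefficient of $x^{k+i}$ is $c_1^{\,n-k+1-i}\alpha_{k+i}$ for $0\le i\le n-k$; (ii) for each $c_1\in\mathbb{C}$ with $c_1\neq 0$, $\mathbf{A}$ has at least one generator $x=c_1a+c_2a^2+\cdots+c_na^n$ (with this first coordinate $c_1$) satisfying the displayed identity of (i).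
   Context: A (left) Leibniz algebra is a vector space with a bilinear product such that $x(yz)=(xy)z+y(xz)$ for all $x,y,z$. A cyclic Leibniz algebra is a Leibniz algebra generated by a single element. For an element $x$ set $x^1=x$ and $x^{j+1}=x\,x^j$. In an $n$-dimensional cyclic Leibniz algebra, an element $x$ is called a generator (cyclic generator) if $\{x,x^2,\ldots,x^n\}$ is a basis. *)

theory Defs
  imports Complex_Main
begin

definition leibniz_algebra ::
  "(complex \<Rightarrow> 'v::ab_group_add \<Rightarrow> 'v) \<Rightarrow> ('v \<Rightarrow> 'v \<Rightarrow> 'v) \<Rightarrow> bool" where
  "leibniz_algebra sc m \<longleftrightarrow>
     vector_space sc \<and>
     (\<forall>x. Vector_Spaces.linear sc sc (m x)) \<and>
     (\<forall>y. Vector_Spaces.linear sc sc (\<lambda>x. m x y)) \<and>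
     (\<forall>x y z. m x (m y z) = m (m x y) z + m y (m x z))"

text \<open>Left-normed powers: x^1 = x, x^(j+1) = x x^j (the value at 0 is irrelevant).\<close>

fun lpow :: "('v \<Rightarrow> 'v \<Rightarrow> 'v) \<Rightarrow> 'v \<Rightarrow> nat \<Rightarrow> 'v" where
  "lpow m x 0 = x"
| "lpow m x (Suc 0) = x"
| "lpow m x (Suc (Suc j)) = m x (lpow m x (Suc j))"

definition is_generator ::
  "(complex \<Rightarrow> 'v::ab_group_add \<Rightarrow> 'v) \<Rightarrow> ('v \<Rightarrow> 'v \<Rightarrow> 'v) \<Rightarrow> nat \<Rightarrow> 'v \<Rightarrow> bool" where
  "is_generator sc m n x \<longleftrightarrow>
     inj_on (lpow m x) {1..n} \<and>
     module.independent sc (lpow m x ` {1..n}) \<and>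
     module.span sc (lpow m x ` {1..n}) = UNIV"

end

theory Submission
  imports Defs
begin

text \<open>In a left Leibniz algebra the identity x(yz) = (xy)z + y(xz) with x = y shows that every
  square, hence every a^j with j \<ge> 2, annihilates from the left. So left multiplication by
  x = c_1 a + ... + c_n a^n is c_1 L_a, and x^j = c_1^(j-1) L_a^(j-1) x. The relation
  a a^n = \<Sum> \<alpha>_i a^i says that a polynomial in L_a kills a; it then kills the whole
  L_a-cyclic subspace, which contains x, and rescaling by powers of c_1 gives (i). For (ii),
  x = c_1 a is a generator because x^j = c_1^j a^j.\<close>

lemma lpow_Suc: "1 \<le> j \<Longrightarrow> lpow m x (Suc j) = m x (lpow m x j)"
  by (cases j) auto

lemma lpow_eq_funpow: "1 \<le> j \<Longrightarrow> lpow m x j = (m x ^^ (j - 1)) x"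
proof (induction j rule: dec_induct)
  case (step j)
  then show ?case by (cases j) auto
qed simp

lemma linear_funpow:
  assumes "vector_space s" and "Vector_Spaces.linear s s f"
  shows "Vector_Spaces.linear s s (f ^^ j)"
proof (induction j)
  case 0
  show ?case using vector_space.linear_id[OF assms(1)] by (simp add: id_def)
next
  case (Suc j)
  then show ?case
    unfolding funpow.simps(2) by (rule Vector_Spaces.linear_compose[OF _ assms(2)])
qed

context vector_space
begin

interpretation vector_space_pair scale scale ..

lemma funpow_relation_on_orbit_span:
  assumes T: "Vector_Spaces.linear scale scale T"
    and rel: "(T ^^ n) a = (\<Sum>i\<in>I. \<alpha> i *s (T ^^ d i) a)"
    and y: "y \<in> span (range (\<lambda>j. (T ^^ j) a))"
  shows "(T ^^ n) y = (\<Sum>i\<in>I. \<alpha> i *s (T ^^ d i) y)"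
proof -
  have lin: "Vector_Spaces.linear scale scale (T ^^ j)" for j
    using linear_funpow[OF vector_space_axioms T] .
  have commute: "(T ^^ p) ((T ^^ q) z) = (T ^^ q) ((T ^^ p) z)" for p q z
    by (metis add.commute comp_apply funpow_add)
  have on_orbit: "(T ^^ n) ((T ^^ j) a) = (\<Sum>i\<in>I. \<alpha> i *s (T ^^ d i) ((T ^^ j) a))" for j
  proof -
    have "(T ^^ n) ((T ^^ j) a) = (T ^^ j) ((T ^^ n) a)"
      by (rule commute)
    also have "\<dots> = (\<Sum>i\<in>I. \<alpha> i *s (T ^^ j) ((T ^^ d i) a))"
      by (simp only: rel linear_sum[OF lin] linear_scale[OF lin])
    also have "\<dots> = (\<Sum>i\<in>I. \<alpha> i *s (T ^^ d i) ((T ^^ j) a))"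
      by (simp only: commute[of j])
    finally show ?thesis .
  qed
  have "Vector_Spaces.linear scale scale (\<lambda>z. \<Sum>i\<in>I. \<alpha> i *s (T ^^ d i) z)"
    by (intro linear_compose_sum ballI linear_compose_scale_right[OF lin])
  from linear_eq_on_span[OF lin this _ y] on_orbit show ?thesis
    by blast
qed

end

lemma is_generator_if_spanning:
  assumes vs: "vector_space sc"
    and gen: "is_generator sc m n a"
    and spans: "module.span sc (lpow m x ` {1..n}) = UNIV"
  shows "is_generator sc m n x"
proof -
  interpret vector_space sc by (fact vs)
  define B where "B = lpow m a ` {1..n}"
  define B' where "B' = lpow m x ` {1..n}"
  have inj: "inj_on (lpow m a) {1..n}" and indep: "independent B" and "span B = UNIV"
    using gen unfolding is_generator_def B_def by auto
  interpret finite_dimensional_vector_space sc B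
    by unfold_locales (use indep \<open>span B = UNIV\<close> in \<open>auto simp: B_def\<close>)
  have dim: "dim UNIV = n"
    using inj by (simp add: B_def card_image)
  have "card B' \<le> n"
    unfolding B'_def using card_image_le[of "{1..n}" "lpow m x"] by simp
  moreover have "n \<le> card B'"
    using dim_le_card[of UNIV B'] spans dim by (simp add: B'_def)
  ultimately have "card B' = n" by simp
  then have "inj_on (lpow m x) {1..n}"
    by (intro eq_card_imp_inj_on) (auto simp: B'_def)
  moreover have "independent B'"
    using \<open>card B' = n\<close> spans dim by (intro card_le_dim_spanning[of B' UNIV]) (auto simp: B'_def)
  ultimately show ?thesis
    using spans by (simp add: is_generator_def B'_def)
qed

locale complex_leibniz_algebra =
  fixes sc :: "complex \<Rightarrow> 'v::ab_group_add \<Rightarrow> 'v" and m :: "'v \<Rightarrow> 'v \<Rightarrow> 'v"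
  assumes leibniz_algebra: "leibniz_algebra sc m"
begin

sublocale vector_space sc
  using leibniz_algebra unfolding leibniz_algebra_def by blast

interpretation vector_space_pair sc sc ..

lemma linear_mult_left: "Vector_Spaces.linear sc sc (m x)"
  using leibniz_algebra unfolding leibniz_algebra_def by blast

lemma linear_mult_right: "Vector_Spaces.linear sc sc (\<lambda>x. m x y)"
  using leibniz_algebra unfolding leibniz_algebra_def by blast

lemma leibniz_identity: "m x (m y z) = m (m x y) z + m y (m x z)"
  using leibniz_algebra unfolding leibniz_algebra_def by blast

lemma mult_lpow_left_eq_0:
  assumes "2 \<le> j" shows "m (lpow m a j) z = 0"
  using assms
proof (induction j arbitrary: z rule: dec_induct)
  case base
  show ?case using leibniz_identity[of a a z] by (simp add: numeral_2_eq_2)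
next
  case (step j)
  then show ?case
    using leibniz_identity[of a "lpow m a j" z]
    by (simp add: lpow_Suc linear_0[OF linear_mult_left])
qed

lemma mult_left_lin_comb_lpow:
  assumes "1 \<le> n"
  shows "m (\<Sum>i=1..n. sc (c i) (lpow m a i)) y = sc (c 1) (m a y)"
proof -
  have "m (\<Sum>i=1..n. sc (c i) (lpow m a i)) y = (\<Sum>i=1..n. sc (c i) (m (lpow m a i) y))"
    by (simp add: linear_sum[OF linear_mult_right] linear_scale[OF linear_mult_right])
  also have "\<dots> = sc (c 1) (m a y) + (\<Sum>i=2..n. sc (c i) (m (lpow m a i) y))"
    using assms by (simp add: sum.atLeast_Suc_atMost numeral_2_eq_2)
  also have "(\<Sum>i=2..n. sc (c i) (m (lpow m a i) y)) = 0"
    by (simp add: mult_lpow_left_eq_0)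
  finally show ?thesis by simp
qed

lemma lpow_lin_comb_lpow:
  fixes c :: "nat \<Rightarrow> complex" and a :: 'v
  assumes "1 \<le> n" and "1 \<le> j"
  defines "x \<equiv> \<Sum>i=1..n. sc (c i) (lpow m a i)"
  shows "lpow m x j = sc (c 1 ^ (j - 1)) ((m a ^^ (j - 1)) x)"
  using assms(2)
proof (induction j rule: dec_induct)
  case (step j)
  have "lpow m x (Suc j) = sc (c 1) (m a (lpow m x j))"
    using step.hyps mult_left_lin_comb_lpow[OF assms(1)] by (simp add: lpow_Suc x_def)
  also have "\<dots> = sc (c 1 ^ j) ((m a ^^ j) x)"
    using step by (cases j) (simp_all add: linear_scale[OF linear_mult_left])
  finally show ?case by simp
qed simp

lemma lpow_scale:
  assumes "1 \<le> j" shows "lpow m (sc c a) j = sc (c ^ j) (lpow m a j)"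
  using assms
proof (induction j rule: dec_induct)
  case (step j)
  then show ?case
    by (simp add: lpow_Suc linear_scale[OF linear_mult_left] linear_scale[OF linear_mult_right])
qed simp

lemma lpow_relation_lin_comb:
  fixes c \<alpha> :: "nat \<Rightarrow> complex" and a :: 'v
  assumes k: "2 \<le> k" "k \<le> n"
    and rel: "m a (lpow m a n) = (\<Sum>i=k..n. sc (\<alpha> i) (lpow m a i))"
  defines "x \<equiv> \<Sum>i=1..n. sc (c i) (lpow m a i)"
  shows "m x (lpow m x n) = (\<Sum>i=k..n. sc (c 1 ^ (n + 1 - i) * \<alpha> i) (lpow m x i))"
proof -
  define T where "T = m a"
  have n: "1 \<le> n" using k by simp
  have lpow_a: "lpow m a i = (T ^^ (i - 1)) a" if "1 \<le> i" for i
    using lpow_eq_funpow[OF that] by (simp add: T_def)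
  have lpow_x: "lpow m x i = sc (c 1 ^ (i - 1)) ((T ^^ (i - 1)) x)" if "1 \<le> i" for i
    using lpow_lin_comb_lpow[OF n that] by (simp add: T_def x_def)
  have "(T ^^ n) a = T ((T ^^ (n - 1)) a)"
    using n by (cases n) simp_all
  also have "\<dots> = m a (lpow m a n)"
    using lpow_a[OF n] by (simp add: T_def)
  also have "\<dots> = (\<Sum>i=k..n. sc (\<alpha> i) ((T ^^ (i - 1)) a))"
    unfolding rel using k by (intro sum.cong refl) (simp add: lpow_a)
  finally have Tn_a: "(T ^^ n) a = (\<Sum>i=k..n. sc (\<alpha> i) ((T ^^ (i - 1)) a))" .
  have x_span: "x \<in> span (range (\<lambda>j. (T ^^ j) a))"
    unfolding x_def by (intro span_sum span_scale) (simp add: lpow_a span_base)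
  have Tn_x: "(T ^^ n) x = (\<Sum>i=k..n. sc (\<alpha> i) ((T ^^ (i - 1)) x))"
    using funpow_relation_on_orbit_span[OF linear_mult_left Tn_a[unfolded T_def] x_span[unfolded T_def]]
    by (simp add: T_def)
  have "m x (lpow m x n) = lpow m x (Suc n)"
    using n by (simp add: lpow_Suc)
  also have "\<dots> = sc (c 1 ^ n) ((T ^^ n) x)"
    using lpow_x[of "Suc n"] by simp
  also have "\<dots> = (\<Sum>i=k..n. sc (c 1 ^ n * \<alpha> i) ((T ^^ (i - 1)) x))"
    by (simp add: Tn_x scale_sum_right)
  also have "\<dots> = (\<Sum>i=k..n. sc (c 1 ^ (n + 1 - i) * \<alpha> i) (lpow m x i))"
  proof (rule sum.cong[OF refl])
    fix i assume i: "i \<in> {k..n}"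
    then have "c 1 ^ (n + 1 - i) * c 1 ^ (i - 1) = c 1 ^ n"
      using k by (simp flip: power_add)
    then show "sc (c 1 ^ n * \<alpha> i) ((T ^^ (i - 1)) x) = sc (c 1 ^ (n + 1 - i) * \<alpha> i) (lpow m x i)"
      using i k by (simp add: lpow_x mult_ac)
  qed
  finally show ?thesis .
qed

lemma is_generator_scale:
  assumes gen: "is_generator sc m n a" and "c \<noteq> 0"
  shows "is_generator sc m n (sc c a)"
proof (rule is_generator_if_spanning[OF vector_space_axioms gen])
  have "lpow m a j \<in> span (lpow m (sc c a) ` {1..n})" if "j \<in> {1..n}" for j
  proof -
    have "lpow m a j = sc (inverse (c ^ j)) (lpow m (sc c a) j)"
      using that \<open>c \<noteq> 0\<close> by (simp add: lpow_scale)
    then show ?thesis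
      using that by (simp add: span_base span_scale)
  qed
  then have "span (lpow m a ` {1..n}) \<subseteq> span (lpow m (sc c a) ` {1..n})"
    by (intro span_minimal subspace_span) auto
  then show "span (lpow m (sc c a) ` {1..n}) = UNIV"
    using gen by (auto simp: is_generator_def)
qed

end

theorem lemma3p2:
  fixes sc :: "complex \<Rightarrow> 'v::ab_group_add \<Rightarrow> 'v"
    and m :: "'v \<Rightarrow> 'v \<Rightarrow> 'v"
    and n k :: nat and a :: 'v and \<alpha> :: "nat \<Rightarrow> complex"
  assumes alg: "leibniz_algebra sc m"
    and gen: "is_generator sc m n a"
    and k: "2 \<le> k" "k \<le> n"
    and rel: "m a (lpow m a n) = (\<Sum>i=k..n. sc (\<alpha> i) (lpow m a i))"
    and ak: "\<alpha> k \<noteq> 0"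
  shows "(\<forall>c :: nat \<Rightarrow> complex.
            is_generator sc m n (\<Sum>i=1..n. sc (c i) (lpow m a i)) \<longrightarrow>
            (let x = (\<Sum>i=1..n. sc (c i) (lpow m a i)) in
               m x (lpow m x n) = (\<Sum>i=k..n. sc (c 1 ^ (n + 1 - i) * \<alpha> i) (lpow m x i))))
       \<and> (\<forall>c1 :: complex. c1 \<noteq> 0 \<longrightarrow>
            (\<exists>c :: nat \<Rightarrow> complex. c 1 = c1 \<and>
               (let x = (\<Sum>i=1..n. sc (c i) (lpow m a i)) in
                  is_generator sc m n x \<and>
                  m x (lpow m x n) = (\<Sum>i=k..n. sc (c 1 ^ (n + 1 - i) * \<alpha> i) (lpow m x i)))))"
proof -
  interpret complex_leibniz_algebra sc m by unfold_locales (fact alg)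
  have identity: "let x = (\<Sum>i=1..n. sc (c i) (lpow m a i)) in
      m x (lpow m x n) = (\<Sum>i=k..n. sc (c 1 ^ (n + 1 - i) * \<alpha> i) (lpow m x i))" for c
    unfolding Let_def by (rule lpow_relation_lin_comb[OF k rel])
  have generator: "\<exists>c. c 1 = c1 \<and> is_generator sc m n (\<Sum>i=1..n. sc (c i) (lpow m a i))"
    if "c1 \<noteq> 0" for c1
  proof (intro exI conjI)
    show "is_generator sc m n (\<Sum>i=1..n. sc (if i = 1 then c1 else 0) (lpow m a i))"
      using is_generator_scale[OF gen that] k by (simp add: sum.atLeast_Suc_atMost)
  qed simp
  show ?thesis
    using identity generator by (simp add: Let_def)
qed

end
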